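(* Let $C$ be a weakly compact convex subset of a Banach space $X$ and let $T:C\to C$ be an orbitally Kannan mapping which diminishes the radius of orbits. Then the following are equivalent: (1) $T$ has a unique fixed point; (2) $\inf\{r_x(O_T(x)):x\in C\}=0$; (3) for every $x\in C$ with $r_x(O_T(x))>0$ there exists $y\in C$ with $r_x(O_T(x))>r_y(O_T(y))$.
   Context: For $x\in X$ and $A\subseteq X$, $r_x(A)=\sup\{\|x-y\|:y\in A\}$; $O_T(x)=\{x,Tx,T^2x,\dots\}$. $T$ is orbitally Kannan if $\|Tx-Ty\|\le\frac12\big(r_x(O_T(x))+r_y(O_T(y))\big)$ for all $x,y\in C$. $T$ diminishes the radius of orbits if $r_{Tx}(O_T(Tx))\le r_x(O_T(x))$ for all $x\in C$. *)

theory Defs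
  imports "HOL-Analysis.Analysis"
begin

definition weak_topology :: "'a::real_normed_vector topology" where
  "weak_topology = topology (generate_topology
      {f -` U | (f :: 'a \<Rightarrow> real) U. bounded_linear f \<and> open U})"

definition weakly_compact :: "'a::real_normed_vector set \<Rightarrow> bool" where
  "weakly_compact C \<longleftrightarrow> compactin weak_topology C"

definition orbit :: "('a \<Rightarrow> 'a) \<Rightarrow> 'a \<Rightarrow> 'a set" where
  "orbit T x = {(T ^^ n) x | n. True}"

definition rad :: "'a::real_normed_vector \<Rightarrow> 'a set \<Rightarrow> real" where
  "rad x A = (SUP y\<in>A. norm (x - y))"

definition orbitally_kannan :: "'a::real_normed_vector set \<Rightarrow> ('a \<Rightarrow> 'a) \<Rightarrow> bool" where
  "orbitally_kannan C T \<longleftrightarrow> (\<forall>x\<in>C. \<forall>y\<in>C.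
     norm (T x - T y) \<le> (rad x (orbit T x) + rad y (orbit T y)) / 2)"

definition diminishes_orbit_radius :: "'a::real_normed_vector set \<Rightarrow> ('a \<Rightarrow> 'a) \<Rightarrow> bool" where
  "diminishes_orbit_radius C T \<longleftrightarrow> (\<forall>x\<in>C. rad (T x) (orbit T (T x)) \<le> rad x (orbit T x))"

end

(*
  Let c be the infimum over C of r x = rad x (orbit T x). The Kannan inequality
  norm (T x - T w) <= (r x + r w) / 2 shows, taking r x close to c, that the closed balls
  around T w of radius (c + r w) / 2, for w in C, have approximate common points in C.
  Closed balls are weakly closed by the Hahn-Banach theorem, so weak compactness yields an
  exact common point z in C. Then norm (z - T^(n+1) z) <= (c + r (T^n z)) / 2 <= (c + r z) / 2,
  as T diminishes the radius of orbits, whence r z <= c: the infimum is a minimum. All three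
  conditions now say that this minimum is 0, since r z = 0 forces T z = z and the Kannan
  inequality makes fixed points unique.
*)
theory Submission
  imports Defs
begin

(* A linear functional on a subspace, bounded above by the norm, is represented by its graph,
   a subspace of X \<times> real; Zorn's lemma then runs over sets ordered by inclusion. *)

definition dominated_graph :: "('a::real_normed_vector \<times> real) set \<Rightarrow> bool" where
  "dominated_graph G \<longleftrightarrow> subspace G \<and> (\<forall>(x, a)\<in>G. a \<le> norm x)"

lemma dominated_graphD:
  assumes "dominated_graph G"
  shows "subspace G" and "(x, a) \<in> G \<Longrightarrow> a \<le> norm x"
  using assms unfolding dominated_graph_def by auto

lemma dominated_graph_unique:
  assumes G: "dominated_graph G" and "(x, a) \<in> G" "(x, b) \<in> G"
  shows "a = b"
proof -
  have "(0, a - b) \<in> G" "(0, b - a) \<in> G"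
    using subspace_diff[OF dominated_graphD(1)[OF G]] assms(2,3) by force+
  from dominated_graphD(2)[OF G this(1)] dominated_graphD(2)[OF G this(2)] show ?thesis
    by simp
qed

lemma dominated_graph_extension_bounds:
  assumes G: "dominated_graph G"
  obtains \<alpha> where "\<And>y a. (y, a) \<in> G \<Longrightarrow> a - norm (y - x) \<le> \<alpha>"
    and "\<And>z b. (z, b) \<in> G \<Longrightarrow> \<alpha> \<le> norm (z + x) - b"
proof -
  have sub: "subspace G"
    using dominated_graphD[OF G] by auto
  have sep: "a - norm (y - x) \<le> norm (z + x) - b" if "(y, a) \<in> G" "(z, b) \<in> G" for y a z b
  proof -
    have "a + b \<le> norm (y + z)"
      using dominated_graphD(2)[OF G] subspace_add[OF sub that] by simp
    also have "\<dots> \<le> norm (y - x) + norm (z + x)"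
      using norm_triangle_ineq[of "y - x" "z + x"] by simp
    finally show ?thesis by simp
  qed
  have G0: "(0, 0) \<in> G"
    using subspace_0[OF sub] by (simp add: zero_prod_def)
  define L where "L = {a - norm (y - x) | y a. (y, a) \<in> G}"
  have "bdd_above L"
    by (rule bdd_aboveI[of _ "norm x"]) (use sep[OF _ G0] in \<open>auto simp: L_def\<close>)
  have "L \<noteq> {}"
    using G0 unfolding L_def by blast
  show thesis
  proof (rule that)
    show "a - norm (y - x) \<le> Sup L" if "(y, a) \<in> G" for y a
      by (rule cSup_upper[OF _ \<open>bdd_above L\<close>]) (use that in \<open>auto simp: L_def\<close>)
    show "Sup L \<le> norm (z + x) - b" if "(z, b) \<in> G" for z b
      by (rule cSup_least[OF \<open>L \<noteq> {}\<close>]) (use sep[OF _ that] in \<open>auto simp: L_def\<close>)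
  qed
qed

lemma dominated_graph_extension_value:
  assumes G: "dominated_graph G"
  obtains \<alpha> where "\<And>y a t. (y, a) \<in> G \<Longrightarrow> a + t * \<alpha> \<le> norm (y + t *\<^sub>R x)"
proof -
  obtain \<alpha> where lower: "\<And>y a. (y, a) \<in> G \<Longrightarrow> a - norm (y - x) \<le> \<alpha>"
    and upper: "\<And>z b. (z, b) \<in> G \<Longrightarrow> \<alpha> \<le> norm (z + x) - b"
    using dominated_graph_extension_bounds[OF G] by blast
  have scale: "(c *\<^sub>R y, c * a) \<in> G" if "(y, a) \<in> G" for c y a
    using subspace_scale[OF dominated_graphD(1)[OF G] that, of c] by simp
  show thesis
  proof (rule that)
    fix y a and t :: real assume ya: "(y, a) \<in> G"
    consider "t = 0" | "t > 0" | "t < 0" by linarith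
    then show "a + t * \<alpha> \<le> norm (y + t *\<^sub>R x)"
    proof cases
      case 1
      then show ?thesis using dominated_graphD(2)[OF G ya] by simp
    next
      case 2
      have "t * \<alpha> \<le> t * (norm (inverse t *\<^sub>R y + x) - inverse t * a)"
        using upper[OF scale[OF ya]] 2 by (simp add: mult_left_mono)
      also have "\<dots> = norm (t *\<^sub>R (inverse t *\<^sub>R y + x)) - a"
        using 2 by (simp add: right_diff_distrib)
      also have "t *\<^sub>R (inverse t *\<^sub>R y + x) = y + t *\<^sub>R x"
        using 2 by (simp add: scaleR_add_right)
      finally show ?thesis by simp
    next
      case 3
      define s where "s = - t"
      have s: "s > 0" using 3 by (simp add: s_def)
      have "s * (inverse s * a - norm (inverse s *\<^sub>R y - x)) \<le> s * \<alpha>"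
        using lower[OF scale[OF ya]] s by (simp add: mult_left_mono)
      also have "s * (inverse s * a - norm (inverse s *\<^sub>R y - x)) = a - norm (s *\<^sub>R (inverse s *\<^sub>R y - x))"
        using s by (simp add: right_diff_distrib)
      also have "s *\<^sub>R (inverse s *\<^sub>R y - x) = y + t *\<^sub>R x"
        using s by (simp add: scaleR_diff_right s_def)
      finally show ?thesis by (simp add: s_def)
    qed
  qed
qed

lemma dominated_graph_extend:
  assumes G: "dominated_graph G"
  obtains \<alpha> where "dominated_graph (span (insert (x, \<alpha>) G))"
proof -
  obtain \<alpha> where \<alpha>: "\<And>y a t. (y, a) \<in> G \<Longrightarrow> a + t * \<alpha> \<le> norm (y + t *\<^sub>R x)"
    using dominated_graph_extension_value[OF G] by blast
  have "b \<le> norm z" if zb: "(z, b) \<in> span (insert (x, \<alpha>) G)" for z b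
  proof -
    obtain t where "(z, b) - t *\<^sub>R (x, \<alpha>) \<in> span G"
      using zb span_breakdown_eq by blast
    moreover have "span G = G"
      using dominated_graphD(1)[OF G] by simp
    ultimately have "(z, b) - t *\<^sub>R (x, \<alpha>) \<in> G"
      by simp
    then have "(z - t *\<^sub>R x, b - t * \<alpha>) \<in> G" by simp
    from \<alpha>[OF this, of t] show ?thesis by simp
  qed
  then have "dominated_graph (span (insert (x, \<alpha>) G))"
    unfolding dominated_graph_def by auto
  then show thesis by (rule that)
qed

lemma subspace_Union_chain:
  assumes "\<C> \<noteq> {}" and "\<And>S. S \<in> \<C> \<Longrightarrow> subspace S"
    and chain: "\<And>S T. S \<in> \<C> \<Longrightarrow> T \<in> \<C> \<Longrightarrow> S \<subseteq> T \<or> T \<subseteq> S"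
  shows "subspace (\<Union>\<C>)"
  unfolding subspace_def
proof (intro conjI ballI allI)
  show "0 \<in> \<Union>\<C>" using assms(1,2) subspace_0 by blast
next
  fix p q assume "p \<in> \<Union>\<C>" "q \<in> \<Union>\<C>"
  then obtain S where "S \<in> \<C>" "p \<in> S" "q \<in> S" using chain by blast
  then show "p + q \<in> \<Union>\<C>" using assms(2) subspace_add by blast
next
  fix c p assume "p \<in> \<Union>\<C>"
  then show "c *\<^sub>R p \<in> \<Union>\<C>" using assms(2) subspace_scale by blast
qed

lemma dominated_graph_Union_chain:
  assumes "\<C> \<noteq> {}" and "\<And>G. G \<in> \<C> \<Longrightarrow> dominated_graph G"
    and "\<And>G H. G \<in> \<C> \<Longrightarrow> H \<in> \<C> \<Longrightarrow> G \<subseteq> H \<or> H \<subseteq> G"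
  shows "dominated_graph (\<Union>\<C>)"
proof -
  have "subspace (\<Union>\<C>)"
    using subspace_Union_chain[OF assms(1)] assms(2,3) dominated_graphD(1) by blast
  moreover have "\<forall>(x, a)\<in>\<Union>\<C>. a \<le> norm x"
    using assms(2) dominated_graphD(2) by blast
  ultimately show ?thesis
    unfolding dominated_graph_def by blast
qed

lemma total_dominated_graph_functional:
  assumes M: "dominated_graph M" and total: "\<And>x. \<exists>a. (x, a) \<in> M"
  obtains f where "bounded_linear f" "\<And>y. f y \<le> norm y" "\<And>x. (x, f x) \<in> M"
proof -
  define f where "f x = (THE a. (x, a) \<in> M)" for x
  have f_eq: "f x = a" if "(x, a) \<in> M" for x a
    unfolding f_def using that dominated_graph_unique[OF M] by blast
  have graph: "(x, f x) \<in> M" for x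
    using total f_eq by blast
  have sub: "subspace M" and le: "f y \<le> norm y" for y
    using dominated_graphD[OF M] graph by auto
  have add: "f (x + y) = f x + f y" for x y
    using f_eq subspace_add[OF sub graph graph] by simp
  have scale: "f (c *\<^sub>R x) = c *\<^sub>R f x" for c x
    using f_eq subspace_scale[OF sub graph] by simp
  have "norm (f x) \<le> norm x * 1" for x
    using le[of x] le[of "- x"] scale[of "-1" x] by simp
  then have "bounded_linear f"
    by (rule bounded_linear_intro[OF add scale])
  then show thesis
    by (rule that[OF _ le graph])
qed

lemma dominated_graph_span_norm: "dominated_graph (span {(v, norm v)})"
proof -
  have "t * norm v \<le> norm (t *\<^sub>R v)" for t
    using mult_right_mono[OF abs_ge_self norm_ge_zero] by simp
  then have "\<forall>(x, a)\<in>span {(v, norm v)}. a \<le> norm x"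
    unfolding span_singleton by auto
  then show ?thesis
    unfolding dominated_graph_def by simp
qed

lemma exists_norming_functional:
  fixes v :: "'a::real_normed_vector"
  obtains f where "bounded_linear f" "\<And>y. f y \<le> norm y" "f v = norm v"
proof -
  define \<A> where "\<A> = {G. dominated_graph G \<and> (v, norm v) \<in> G}"
  have "span {(v, norm v)} \<in> \<A>"
    unfolding \<A>_def using dominated_graph_span_norm by (simp add: span_base)
  moreover have "\<Union>\<C> \<in> \<A>" if "\<C> \<noteq> {}" and chain: "subset.chain \<A> \<C>" for \<C>
  proof -
    have graphs: "dominated_graph G" "(v, norm v) \<in> G" if "G \<in> \<C>" for G
      using chain that unfolding subset_chain_def \<A>_def by auto
    have comparable: "G \<subseteq> H \<or> H \<subseteq> G" if "G \<in> \<C>" "H \<in> \<C>" for G H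
      using chain that unfolding subset_chain_def by blast
    have "dominated_graph (\<Union>\<C>)"
      by (rule dominated_graph_Union_chain[OF \<open>\<C> \<noteq> {}\<close> graphs(1) comparable])
    moreover have "(v, norm v) \<in> \<Union>\<C>"
      using graphs(2) \<open>\<C> \<noteq> {}\<close> by blast
    ultimately show ?thesis
      unfolding \<A>_def by simp
  qed
  ultimately obtain M where "M \<in> \<A>" and max: "\<And>G. G \<in> \<A> \<Longrightarrow> M \<subseteq> G \<Longrightarrow> G = M"
    using subset_Zorn_nonempty[of \<A>] by blast
  then have M: "dominated_graph M" and vM: "(v, norm v) \<in> M"
    unfolding \<A>_def by auto
  have total: "\<exists>a. (x, a) \<in> M" for x
  proof -
    obtain \<alpha> where ext: "dominated_graph (span (insert (x, \<alpha>) M))"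
      using dominated_graph_extend[OF M] by blast
    have sup: "insert (x, \<alpha>) M \<subseteq> span (insert (x, \<alpha>) M)"
      by (rule span_superset)
    then have "span (insert (x, \<alpha>) M) = M"
      using max[of "span (insert (x, \<alpha>) M)"] ext vM unfolding \<A>_def by blast
    then show ?thesis
      using sup by blast
  qed
  obtain f where f: "bounded_linear f" "\<And>y. f y \<le> norm y" and graph: "\<And>x. (x, f x) \<in> M"
    using total_dominated_graph_functional[OF M total] by metis
  have "f v = norm v"
    using dominated_graph_unique[OF M graph vM] .
  with f show thesis
    by (rule that)
qed

lemma istopology_generate_topology: "istopology (generate_topology S)"
  unfolding istopology_def by (auto intro: generate_topology.Int generate_topology.UN)

lemma openin_weak_topology_halfspace:
  fixes f :: "'a::real_normed_vector \<Rightarrow> real"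
  assumes "bounded_linear f"
  shows "openin weak_topology {y. t < f y}"
proof -
  have "{y. t < f y} = f -` {t<..}" by auto
  moreover have "f -` {t<..} \<in> {g -` U | (g :: 'a \<Rightarrow> real) U. bounded_linear g \<and> open U}"
    using assms open_greaterThan by blast
  ultimately have "{y. t < f y} \<in> {g -` U | (g :: 'a \<Rightarrow> real) U. bounded_linear g \<and> open U}"
    by simp
  then show ?thesis
    unfolding weak_topology_def topology_inverse'[OF istopology_generate_topology]
    by (rule generate_topology.Basis)
qed

lemma openin_weak_topology_outside_cball:
  fixes a :: "'a::real_normed_vector"
  shows "openin weak_topology {y. \<rho> < norm (y - a)}"
proof (subst openin_subopen, intro ballI)
  fix z assume "z \<in> {y. \<rho> < norm (y - a)}"
  then have z: "\<rho> < norm (z - a)" by simp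
  obtain f where f: "bounded_linear f" "\<And>y. f y \<le> norm y" "f (z - a) = norm (z - a)"
    using exists_norming_functional by blast
  have diff: "f (y - a) = f y - f a" for y
    using f(1) by (simp add: linear_diff bounded_linear.linear)
  show "\<exists>U. openin weak_topology U \<and> z \<in> U \<and> U \<subseteq> {y. \<rho> < norm (y - a)}"
  proof (intro exI conjI)
    show "openin weak_topology {y. f a + \<rho> < f y}"
      by (rule openin_weak_topology_halfspace[OF f(1)])
    show "z \<in> {y. f a + \<rho> < f y}"
      using z f(3) diff[of z] by simp
    show "{y. f a + \<rho> < f y} \<subseteq> {y. \<rho> < norm (y - a)}"
    proof
      fix y assume "y \<in> {y. f a + \<rho> < f y}"
      then have "\<rho> < f (y - a)"
        using diff by simp
      also have "\<dots> \<le> norm (y - a)"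
        by (rule f(2))
      finally show "y \<in> {y. \<rho> < norm (y - a)}" by simp
    qed
  qed
qed

lemma weakly_compact_outside_cballs_finite_subcover:
  fixes C :: "'a::real_normed_vector set"
  assumes "weakly_compact C" and "C \<subseteq> (\<Union>w\<in>W. {y. \<rho> w < norm (y - a w)})"
  obtains Q where "finite Q" "Q \<subseteq> W \<times> {0<..}"
    and "C \<subseteq> (\<Union>(w, \<delta>)\<in>Q. {y. \<rho> w + \<delta> < norm (y - a w)})"
proof -
  define U where "U = (\<lambda>(w, \<delta>). {y. \<rho> w + \<delta> < norm (y - a w)})"
  have covers: "C \<subseteq> \<Union>(U ` (W \<times> {0<..}))"
  proof
    fix z assume "z \<in> C"
    then obtain w where "w \<in> W" "\<rho> w < norm (z - a w)"
      using assms(2) by blast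
    then have "z \<in> U (w, (norm (z - a w) - \<rho> w) / 2)" "(w, (norm (z - a w) - \<rho> w) / 2) \<in> W \<times> {0<..}"
      unfolding U_def by (auto simp: field_simps)
    then show "z \<in> \<Union>(U ` (W \<times> {0<..}))" by blast
  qed
  have opens: "\<forall>V\<in>U ` (W \<times> {0<..}). openin weak_topology V"
    unfolding U_def using openin_weak_topology_outside_cball by auto
  have "\<exists>\<F>. finite \<F> \<and> \<F> \<subseteq> U ` (W \<times> {0<..}) \<and> C \<subseteq> \<Union>\<F>"
    using assms(1) covers opens unfolding weakly_compact_def compactin_def by simp
  then obtain \<F> where "finite \<F>" "\<F> \<subseteq> U ` (W \<times> {0<..})" "C \<subseteq> \<Union>\<F>"
    by blast
  then obtain Q where "Q \<subseteq> W \<times> {0<..}" "finite Q" "\<F> = U ` Q"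
    using finite_subset_image[of \<F> U "W \<times> {0<..}"] by blast
  moreover have "C \<subseteq> \<Union>(U ` Q)"
    using \<open>C \<subseteq> \<Union>\<F>\<close> \<open>\<F> = U ` Q\<close> by simp
  ultimately show thesis
    using that unfolding U_def by simp
qed

lemma weakly_compact_common_point:
  fixes C :: "'a::real_normed_vector set"
  assumes "weakly_compact C"
    and approx: "\<And>\<epsilon>. \<epsilon> > 0 \<Longrightarrow> \<exists>y\<in>C. \<forall>w\<in>W. norm (y - a w) \<le> \<rho> w + \<epsilon>"
  shows "\<exists>z\<in>C. \<forall>w\<in>W. norm (z - a w) \<le> \<rho> w"
proof (rule ccontr)
  assume none: "\<not> ?thesis"
  have "C \<subseteq> (\<Union>w\<in>W. {y. \<rho> w < norm (y - a w)})"
  proof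
    fix z assume "z \<in> C"
    with none obtain w where "w \<in> W" "\<not> norm (z - a w) \<le> \<rho> w"
      by blast
    then show "z \<in> (\<Union>w\<in>W. {y. \<rho> w < norm (y - a w)})"
      by (auto simp: not_le)
  qed
  then obtain Q where Q: "finite Q" "Q \<subseteq> W \<times> {0<..}"
    and cover: "C \<subseteq> (\<Union>(w, \<delta>)\<in>Q. {y. \<rho> w + \<delta> < norm (y - a w)})"
    by (rule weakly_compact_outside_cballs_finite_subcover[OF assms(1)])
  obtain y0 where "y0 \<in> C"
    using approx[of 1] by auto
  from cover this have "y0 \<in> (\<Union>(w, \<delta>)\<in>Q. {y. \<rho> w + \<delta> < norm (y - a w)})"
    by (rule subsetD)
  then have "Q \<noteq> {}"
    by auto
  define \<epsilon> where "\<epsilon> = Min (snd ` Q)"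
  have "\<epsilon> > 0"
    unfolding \<epsilon>_def using Q \<open>Q \<noteq> {}\<close> by (subst Min_gr_iff) auto
  then obtain y where "y \<in> C" and y: "\<And>w. w \<in> W \<Longrightarrow> norm (y - a w) \<le> \<rho> w + \<epsilon>"
    using approx by blast
  from cover \<open>y \<in> C\<close> have "y \<in> (\<Union>(w, \<delta>)\<in>Q. {y. \<rho> w + \<delta> < norm (y - a w)})"
    by (rule subsetD)
  then obtain w \<delta> where "(w, \<delta>) \<in> Q" and far: "\<rho> w + \<delta> < norm (y - a w)"
    by auto
  then have "w \<in> W" and "\<delta> \<in> snd ` Q"
    using Q(2) by (auto intro: image_eqI[of _ _ "(w, \<delta>)"])
  then have "\<epsilon> \<le> \<delta>"
    unfolding \<epsilon>_def using Q(1) by (intro Min_le) auto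
  then show False
    using y[OF \<open>w \<in> W\<close>] far by linarith
qed

abbreviation orbit_radius :: "('a \<Rightarrow> 'a) \<Rightarrow> 'a::real_normed_vector \<Rightarrow> real" where
  "orbit_radius T x \<equiv> rad x (orbit T x)"

lemma orbit_radius_eq_SUP: "orbit_radius T x = (SUP n. norm (x - (T ^^ n) x))"
proof -
  have "orbit T x = range (\<lambda>n. (T ^^ n) x)"
    unfolding orbit_def by (simp add: full_SetCompr_eq)
  then show ?thesis
    unfolding rad_def by (simp add: image_image)
qed

lemma orbit_radius_le:
  "(\<And>n. norm (x - (T ^^ n) x) \<le> B) \<Longrightarrow> orbit_radius T x \<le> B"
  unfolding orbit_radius_eq_SUP by (rule cSUP_least) auto

lemma orbit_radius_fixed_point:
  assumes "T p = p"
  shows "orbit_radius T p = 0"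
proof -
  have "(T ^^ n) p = p" for n
    by (induction n) (simp_all add: assms)
  then show ?thesis
    unfolding orbit_radius_eq_SUP by simp
qed

lemma orbitally_kannan_fixed_point_unique:
  assumes "orbitally_kannan C T" and "p \<in> C" "q \<in> C" "T p = p" "T q = q"
  shows "p = q"
proof -
  have "norm (T p - T q) \<le> (orbit_radius T p + orbit_radius T q) / 2"
    using assms(1-3) unfolding orbitally_kannan_def by blast
  then show ?thesis
    using assms(4,5) by (simp add: orbit_radius_fixed_point)
qed

locale orbitally_kannan_map =
  fixes C :: "'a::real_normed_vector set" and T :: "'a \<Rightarrow> 'a"
  assumes maps_into: "T ` C \<subseteq> C"
    and kannan: "orbitally_kannan C T"
    and diminishes: "diminishes_orbit_radius C T"
begin

lemma funpow_in: "x \<in> C \<Longrightarrow> (T ^^ n) x \<in> C"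
  by (induction n) (use maps_into in auto)

lemma kannan_ineq:
  "x \<in> C \<Longrightarrow> y \<in> C \<Longrightarrow> norm (T x - T y) \<le> (orbit_radius T x + orbit_radius T y) / 2"
  using kannan unfolding orbitally_kannan_def by blast

lemma orbit_radius_funpow_le: "x \<in> C \<Longrightarrow> orbit_radius T ((T ^^ n) x) \<le> orbit_radius T x"
proof (induction n)
  case (Suc n)
  have "orbit_radius T (T ((T ^^ n) x)) \<le> orbit_radius T ((T ^^ n) x)"
    using diminishes funpow_in[OF Suc.prems] unfolding diminishes_orbit_radius_def by blast
  with Suc show ?case by simp
qed simp

(* The SUP of an unbounded set of reals is an unspecified real number; whatever its value,
   the Kannan inequality bounds the orbit by norm (x - T x) + |orbit_radius T x|, so
   orbit_radius is the genuine supremum. *)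

lemma orbit_bounded:
  assumes x: "x \<in> C"
  shows "bdd_above (range (\<lambda>n. norm (x - (T ^^ n) x)))"
proof (rule bdd_aboveI2)
  fix n
  show "norm (x - (T ^^ n) x) \<le> norm (x - T x) + \<bar>orbit_radius T x\<bar>"
  proof (cases n)
    case (Suc k)
    have "norm (x - (T ^^ n) x) \<le> norm (x - T x) + norm (T x - T ((T ^^ k) x))"
      using Suc norm_triangle_ineq[of "x - T x" "T x - T ((T ^^ k) x)"] by simp
    also have "norm (T x - T ((T ^^ k) x)) \<le> (orbit_radius T x + orbit_radius T ((T ^^ k) x)) / 2"
      using kannan_ineq[OF x funpow_in[OF x]] .
    also have "\<dots> \<le> \<bar>orbit_radius T x\<bar>"
      using orbit_radius_funpow_le[OF x, of k] by simp
    finally show ?thesis by simp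
  qed simp
qed

lemma norm_le_orbit_radius: "x \<in> C \<Longrightarrow> norm (x - (T ^^ n) x) \<le> orbit_radius T x"
  unfolding orbit_radius_eq_SUP by (rule cSUP_upper[OF UNIV_I orbit_bounded])

lemma orbit_radius_nonneg: "x \<in> C \<Longrightarrow> 0 \<le> orbit_radius T x"
  using norm_le_orbit_radius[of x 0] by simp

lemma orbit_radius_zero_imp_fixed_point:
  assumes "x \<in> C" and "orbit_radius T x = 0"
  shows "T x = x"
  using norm_le_orbit_radius[OF assms(1), of 1] assms(2) by simp

lemma bdd_below_orbit_radius: "bdd_below (orbit_radius T ` C)"
  using orbit_radius_nonneg by (intro bdd_belowI2)

lemma Inf_orbit_radius_center:
  assumes "weakly_compact C" and "C \<noteq> {}"
  obtains z where "z \<in> C"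
    and "\<And>w. w \<in> C \<Longrightarrow> norm (z - T w) \<le> ((INF x\<in>C. orbit_radius T x) + orbit_radius T w) / 2"
proof -
  define c where "c = (INF x\<in>C. orbit_radius T x)"
  have approx: "\<exists>y\<in>C. \<forall>w\<in>C. norm (y - T w) \<le> (c + orbit_radius T w) / 2 + \<epsilon>"
    if "\<epsilon> > 0" for \<epsilon>
  proof -
    obtain x where "x \<in> C" "orbit_radius T x < c + 2 * \<epsilon>"
      using \<open>\<epsilon> > 0\<close> cINF_less_iff[OF assms(2) bdd_below_orbit_radius, of "c + 2 * \<epsilon>"]
      unfolding c_def by auto
    then have "norm (T x - T w) \<le> (c + orbit_radius T w) / 2 + \<epsilon>" if "w \<in> C" for w
      using kannan_ineq[OF \<open>x \<in> C\<close> that] by argo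
    then show ?thesis
      using maps_into \<open>x \<in> C\<close> by blast
  qed
  obtain z where "z \<in> C" "\<forall>w\<in>C. norm (z - T w) \<le> (c + orbit_radius T w) / 2"
    using weakly_compact_common_point[OF assms(1), where W = C and a = T, OF approx] by blast
  then show thesis
    using that unfolding c_def by blast
qed

lemma orbit_radius_attains_Inf:
  assumes "weakly_compact C" and "C \<noteq> {}"
  obtains z where "z \<in> C" and "orbit_radius T z = (INF x\<in>C. orbit_radius T x)"
proof -
  define c where "c = (INF x\<in>C. orbit_radius T x)"
  obtain z where "z \<in> C" and z: "\<And>w. w \<in> C \<Longrightarrow> norm (z - T w) \<le> (c + orbit_radius T w) / 2"
    using Inf_orbit_radius_center[OF assms] unfolding c_def by metis
  have "0 \<le> c"
    unfolding c_def using assms(2) orbit_radius_nonneg by (intro cINF_greatest)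
  have "norm (z - (T ^^ n) z) \<le> (c + orbit_radius T z) / 2" for n
  proof (cases n)
    case 0
    then show ?thesis
      using \<open>0 \<le> c\<close> orbit_radius_nonneg[OF \<open>z \<in> C\<close>] by simp
  next
    case (Suc k)
    then have "norm (z - (T ^^ n) z) \<le> (c + orbit_radius T ((T ^^ k) z)) / 2"
      using z[OF funpow_in[OF \<open>z \<in> C\<close>]] by simp
    also have "\<dots> \<le> (c + orbit_radius T z) / 2"
      using orbit_radius_funpow_le[OF \<open>z \<in> C\<close>] by simp
    finally show ?thesis .
  qed
  then have "orbit_radius T z \<le> c"
    using orbit_radius_le[of z T "(c + orbit_radius T z) / 2"] by simp
  moreover have "c \<le> orbit_radius T z"
    unfolding c_def by (rule cINF_lower[OF bdd_below_orbit_radius \<open>z \<in> C\<close>])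
  ultimately show thesis
    using that \<open>z \<in> C\<close> unfolding c_def by simp
qed

lemma unique_fixed_point_iff_min_orbit_radius_eq_0:
  assumes "z \<in> C" and min: "\<And>x. x \<in> C \<Longrightarrow> orbit_radius T z \<le> orbit_radius T x"
  shows "(\<exists>!x. x \<in> C \<and> T x = x) \<longleftrightarrow> orbit_radius T z = 0"
proof
  assume "\<exists>!x. x \<in> C \<and> T x = x"
  then obtain p where "p \<in> C" "T p = p" by blast
  then show "orbit_radius T z = 0"
    using min[OF \<open>p \<in> C\<close>] orbit_radius_fixed_point[of T p] orbit_radius_nonneg[OF \<open>z \<in> C\<close>]
    by linarith
next
  assume "orbit_radius T z = 0"
  then have "T z = z"
    using orbit_radius_zero_imp_fixed_point[OF \<open>z \<in> C\<close>] by blast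
  then show "\<exists>!x. x \<in> C \<and> T x = x"
    using orbitally_kannan_fixed_point_unique[OF kannan _ \<open>z \<in> C\<close> _ \<open>T z = z\<close>] \<open>z \<in> C\<close>
    by blast
qed

end

lemma nonneg_minimum_eq_0_iff:
  fixes r :: "'a \<Rightarrow> real"
  assumes "z \<in> C" and min: "\<And>x. x \<in> C \<Longrightarrow> r z \<le> r x" and "0 \<le> r z"
  shows "r z = 0 \<longleftrightarrow> (\<forall>x\<in>C. r x > 0 \<longrightarrow> (\<exists>y\<in>C. r x > r y))"
proof
  assume descent: "\<forall>x\<in>C. r x > 0 \<longrightarrow> (\<exists>y\<in>C. r x > r y)"
  show "r z = 0"
  proof (rule ccontr)
    assume "r z \<noteq> 0"
    with \<open>0 \<le> r z\<close> have "r z > 0" by simp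
    then obtain y where "y \<in> C" "r y < r z"
      using descent \<open>z \<in> C\<close> by blast
    then show False
      using min[OF \<open>y \<in> C\<close>] by simp
  qed
next
  assume "r z = 0"
  show "\<forall>x\<in>C. r x > 0 \<longrightarrow> (\<exists>y\<in>C. r x > r y)"
  proof (intro ballI impI)
    fix x assume "r x > 0"
    then show "\<exists>y\<in>C. r x > r y"
      using \<open>z \<in> C\<close> \<open>r z = 0\<close> by (intro bexI[of _ z]) auto
  qed
qed

theorem theorem4p4:
  fixes C :: "'a::banach set" and T :: "'a \<Rightarrow> 'a"
  assumes "weakly_compact C" and "convex C" and "C \<noteq> {}"
    and "T ` C \<subseteq> C"
    and "orbitally_kannan C T" and "diminishes_orbit_radius C T"
  shows "((\<exists>!x. x \<in> C \<and> T x = x) \<longleftrightarrow> (INF x\<in>C. rad x (orbit T x)) = 0)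
    \<and> ((INF x\<in>C. rad x (orbit T x)) = 0 \<longleftrightarrow>
         (\<forall>x\<in>C. rad x (orbit T x) > 0 \<longrightarrow> (\<exists>y\<in>C. rad x (orbit T x) > rad y (orbit T y))))"
proof -
  interpret orbitally_kannan_map C T
    using assms(4-6) by unfold_locales
  obtain z where "z \<in> C" and min: "orbit_radius T z = (INF x\<in>C. orbit_radius T x)"
    using orbit_radius_attains_Inf[OF assms(1,3)] by blast
  have le_min: "orbit_radius T z \<le> orbit_radius T x" if "x \<in> C" for x
    unfolding min by (rule cINF_lower[OF bdd_below_orbit_radius that])
  show ?thesis
    using unique_fixed_point_iff_min_orbit_radius_eq_0[OF \<open>z \<in> C\<close> le_min]
      nonneg_minimum_eq_0_iff[where r = "orbit_radius T", OF \<open>z \<in> C\<close> le_min orbit_radius_nonneg[OF \<open>z \<in> C\<close>]]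
    unfolding min by simp
qed

end
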